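(* For every integer $n\ge 1$, \[C_n=\sum_{k=0}^{n-1}\left(\binom{n-1}{k}^{2}-\binom{n+1}{k+2}\binom{n-3}{k-2}\right),\] where $C_n$ is the $n$th Catalan number and $\binom{a}{b}=0$ whenever $b<0$. *)

theory Defs
  imports Complex_Main
begin

definition catalan :: "nat \<Rightarrow> nat" where
  "catalan n = ((2 * n) choose n) div (n + 1)"

definition ibinom :: "int \<Rightarrow> int \<Rightarrow> int" where
  "ibinom a b = (if b < 0 then 0 else floor ((of_int a :: real) gchoose (nat b)))"

end

theory Submission
  imports Defs
begin

text \<open>Write \<open>n = h + 1\<close>. The sum of squares is the central binomial coefficient
  \<open>C(2h, h)\<close>. After the shift \<open>k = j + 2\<close> the subtracted sum becomes the Vandermonde
  convolution \<open>\<Sum>j. C(h - 2, j) C(h + 2, j + 4) = C(2h, h + 2)\<close>; for \<open>h < 2\<close> it vanishes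
  term by term because of the convention on negative lower indices, and so does \<open>C(2h, h + 2)\<close>.
  Finally \<open>catalan (h + 1) = C(2h, h) - C(2h, h + 2)\<close> follows from the ratios
  \<open>C(2h, h + 1) / C(2h, h) = h / (h + 1)\<close>, \<open>C(2h, h + 2) / C(2h, h + 1) = (h - 1) / (h + 2)\<close>
  and \<open>C(2h + 2, h + 1) / C(2h, h) = 2(2h + 1) / (h + 1)\<close>.\<close>

lemma ibinom_of_nat: "ibinom (int a) (int b) = int (a choose b)"
proof -
  have "(of_int (int a) :: real) gchoose b = real (a choose b)"
    by (simp add: binomial_gbinomial)
  then show ?thesis
    unfolding ibinom_def by simp
qed

lemma ibinom_neg_index: "b < 0 \<Longrightarrow> ibinom a b = 0"
  by (simp add: ibinom_def)

lemma vandermonde_shifted: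
  "(\<Sum>j\<le>a. (a choose j) * (b choose (j + c))) = (a + b) choose (a + c)"
proof -
  have "(a + b) choose (a + c) = (\<Sum>k\<le>a + c. (a choose k) * (b choose (a + c - k)))"
    by (rule vandermonde[symmetric])
  also have "\<dots> = (\<Sum>k\<le>a. (a choose k) * (b choose (a + c - k)))"
    by (rule sum.mono_neutral_right) auto
  also have "\<dots> = (\<Sum>j\<le>a. (a choose (a - j)) * (b choose (a + c - (a - j))))"
    by (rule sum.reindex_bij_witness[of _ "\<lambda>j. a - j" "\<lambda>j. a - j"]) auto
  also have "\<dots> = (\<Sum>j\<le>a. (a choose j) * (b choose (j + c)))"
    by (rule sum.cong) (auto simp: binomial_symmetric[symmetric] add.commute)
  finally show ?thesis ..
qed

lemma diff_times_choose: "(n - k) * (n choose k) = Suc k * (n choose Suc k)"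
  by (simp only: binomial_absorb_comp binomial_absorption)

lemma Suc_times_central_binomial:
  "Suc n * (2 * Suc n choose Suc n) = 2 * Suc (2 * n) * (2 * n choose n)"
proof -
  have "2 * Suc n = Suc (Suc (2 * n))" by simp
  then have first: "Suc n * (2 * Suc n choose Suc n) = 2 * Suc n * (Suc (2 * n) choose n)"
    using Suc_times_binomial[of n "Suc (2 * n)"] by (simp only:)
  have "Suc (2 * n) choose n = Suc (2 * n) choose Suc n"
    using binomial_symmetric[of n "Suc (2 * n)"] by simp
  then have second: "Suc n * (Suc (2 * n) choose n) = Suc (2 * n) * (2 * n choose n)"
    using Suc_times_binomial[of n "2 * n"] by (simp only:)
  have "Suc n * (Suc n * (2 * Suc n choose Suc n)) = 2 * Suc n * (Suc n * (Suc (2 * n) choose n))"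
    by (simp only: first mult.left_commute)
  also have "\<dots> = Suc n * (2 * Suc (2 * n) * (2 * n choose n))"
    by (simp only: second mult.assoc mult.left_commute)
  finally show ?thesis
    by (simp only: mult_left_cancel[OF Suc_not_Zero])
qed

lemma central_binomial_Suc_eq_choose_diff:
  "int (2 * Suc h choose Suc h) = (int h + 2) * (int (2 * h choose h) - int (2 * h choose (h + 2)))"
proof -
  define B B1 B2 D where "B = int (2 * h choose h)" and "B1 = int (2 * h choose (h + 1))"
    and "B2 = int (2 * h choose (h + 2))" and "D = int (2 * Suc h choose Suc h)"
  have "h * (2 * h choose h) = (h + 1) * (2 * h choose (h + 1))"
    using diff_times_choose[of "2 * h" h] by simp
  then have B1_ratio: "int h * B = (int h + 1) * B1"
    unfolding B_def B1_def by (metis of_nat_Suc of_nat_mult Suc_eq_plus1 add.commute)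
  have B2_nat: "(h - 1) * (2 * h choose (h + 1)) = (h + 2) * (2 * h choose (h + 2))"
  proof -
    have "2 * h - (h + 1) = h - 1" "Suc (h + 1) = h + 2" by simp_all
    then show ?thesis using diff_times_choose[of "2 * h" "h + 1"] by (simp only:)
  qed
  have B2_ratio: "(int h - 1) * B1 = (int h + 2) * B2"
  proof (cases "h = 0")
    case True
    then show ?thesis by (simp add: B1_def B2_def)
  next
    case False
    then show ?thesis
      using arg_cong[OF B2_nat, of int] unfolding B1_def B2_def
      by (simp only: of_nat_mult of_nat_add of_nat_numeral of_nat_diff of_nat_1 flip: One_nat_def)
  qed
  have "int (Suc h) * D = int (2 * Suc (2 * h)) * B"
    unfolding B_def D_def by (simp only: of_nat_mult[symmetric] Suc_times_central_binomial)
  then have D_ratio: "(int h + 1) * D = 2 * (2 * int h + 1) * B"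
    by (simp add: algebra_simps)
  have "(int h + 1) * ((int h + 2) * (B - B2)) = (int h + 1) * D"
    using B1_ratio B2_ratio D_ratio by algebra
  then have "D = (int h + 2) * (B - B2)"
    by simp
  then show ?thesis
    by (simp only: B_def B2_def D_def)
qed

lemma catalan_Suc_eq_choose_diff:
  "int (catalan (Suc h)) = int (2 * h choose h) - int (2 * h choose (h + 2))"
proof -
  have "Suc h + 1 = h + 2"
    by simp
  then have "int (catalan (Suc h)) = int (2 * Suc h choose Suc h) div (int h + 2)"
    unfolding catalan_def by (simp only: zdiv_int of_nat_add of_nat_numeral)
  then show ?thesis
    by (simp only: central_binomial_Suc_eq_choose_diff nonzero_mult_div_cancel_left)
qed

lemma sum_ibinom_squares:
  "(\<Sum>k = 0..h. (ibinom (int h) (int k))^2) = int (2 * h choose h)"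
  by (simp add: ibinom_of_nat atLeast0AtMost choose_square_sum flip: of_nat_power of_nat_sum)

lemma sum_ibinom_products:
  "(\<Sum>k = 0..h. ibinom (int h + 2) (int k + 2) * ibinom (int h - 2) (int k - 2))
    = int (2 * h choose (h + 2))"
  (is "(\<Sum>k = 0..h. ?f k) = _")
proof (cases "h < 2")
  case True
  then have "(\<Sum>k = 0..h. ?f k) = 0"
    by (intro sum.neutral) (simp add: ibinom_neg_index)
  moreover have "2 * h choose (h + 2) = 0"
    using True by (simp add: binomial_eq_0)
  ultimately show ?thesis
    by (simp only: of_nat_0)
next
  case False
  define a where "a = h - 2"
  with False have h: "h = a + 2"
    by simp
  have "(\<Sum>k = 0..h. ?f k) = (\<Sum>k = 0 + 2..a + 2. ?f k)"
    by (rule sum.mono_neutral_right) (auto simp: h ibinom_neg_index)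
  also have "\<dots> = (\<Sum>j = 0..a. ?f (j + 2))"
    by (rule sum.shift_bounds_cl_nat_ivl)
  also have "\<dots> = (\<Sum>j\<le>a. int ((a choose j) * (a + 4 choose (j + 4))))"
  proof (rule sum.cong)
    fix j
    have "int h + 2 = int (a + 4)" "int (j + 2) + 2 = int (j + 4)"
      "int h - 2 = int a" "int (j + 2) - 2 = int j"
      by (simp_all add: h)
    then show "?f (j + 2) = int ((a choose j) * (a + 4 choose (j + 4)))"
      by (simp only: ibinom_of_nat of_nat_mult mult.commute)
  qed (simp add: atLeast0AtMost)
  also have "\<dots> = int (a + (a + 4) choose (a + 4))"
    by (simp only: vandermonde_shifted flip: of_nat_sum)
  also have "a + (a + 4) = 2 * h"
    by (simp add: h)
  also have "a + 4 = h + 2"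
    by (simp add: h)
  finally show ?thesis .
qed

theorem mainTheorem7:
  fixes n :: nat
  assumes "n \<ge> 1"
  shows "int (catalan n) =
    (\<Sum>k = 0..n - 1. (ibinom (int n - 1) (int k))^2
        - ibinom (int n + 1) (int k + 2) * ibinom (int n - 3) (int k - 2))"
proof -
  define h where "h = n - 1"
  with assms have n: "n = Suc h"
    by simp
  have shifts: "n - 1 = h" "int n - 1 = int h" "int n + 1 = int h + 2" "int n - 3 = int h - 2"
    by (simp_all add: n)
  have "(\<Sum>k = 0..n - 1. (ibinom (int n - 1) (int k))^2
        - ibinom (int n + 1) (int k + 2) * ibinom (int n - 3) (int k - 2))
      = (\<Sum>k = 0..h. (ibinom (int h) (int k))^2)
        - (\<Sum>k = 0..h. ibinom (int h + 2) (int k + 2) * ibinom (int h - 2) (int k - 2))"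
    unfolding shifts by (rule sum_subtractf)
  also have "\<dots> = int (2 * h choose h) - int (2 * h choose (h + 2))"
    by (simp only: sum_ibinom_squares sum_ibinom_products)
  also have "\<dots> = int (catalan n)"
    by (simp only: n catalan_Suc_eq_choose_diff)
  finally show ?thesis ..
qed

end
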